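(* Let $1\le p<\infty$ and let $w=(w_n)_{n\in\mathbb{Z}}$ be a complex sequence. Assume $\ell^p_{a,b}(\Omega_{r,R})$ (respectively $c_{0,a,b}(\Omega_{r,R})$) contains all Laurent polynomials. If $B_w$ is a bounded operator on $\ell^p_{a,b}(\Omega_{r,R})$ (respectively $c_{0,a,b}(\Omega_{r,R})$), then the sequences $\left(\frac{w_{n+1}a_{n+1}}{a_n}\right)_{n\in\mathbb{Z}}$ and $(c_n)_{n\in\mathbb{Z}}$ are bounded, where $c_n=w_{n+1}\frac{b_n}{a_n}-w_n\frac{b_{n-1}}{a_{n-1}}$.
   Context: Let $a=(a_n)_{n\in\mathbb{Z}}$ and $b=(b_n)_{n\in\mathbb{Z}}$ be complex sequences with $a_n\ne0$ for all $n$ and $\sup_{n\le-1}\left|\frac{a_{n+1}a_{n+2}\cdots a_0}{b_nb_{n+1}\cdots b_{-1}}\right|=\infty$. Put $f_n(z)=(a_n+b_nz)z^n$. Let $r=\limsup_{n\to+\infty}(|a_{-n}|+|b_{-n}|)^{1/n}$ and $1/R=\limsup_{n\to+\infty}(|a_n|+|b_n|)^{1/n}$ (finite), assume $r<R$, and $\Omega_{r,R}=\{r<|z|<R\}$. $\ell^p_{a,b}(\Omega_{r,R})$ is the Banach space of analytic functions on $\Omega_{r,R}$ of the form $f=\sum_n\lambda_nf_n$ with $(\lambda_n)\in\ell^p(\mathbb{Z})$ (locally uniformly convergent, coefficients unique), norm $(\sum_n|\lambda_n|^p)^{1/p}$; $c_{0,a,b}(\Omega_{r,R})$ likewise with $(\lambda_n)\in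 c_0(\mathbb{Z})$ and sup norm. $B_w$ acts by $B_w(\sum_n\widehat f(n)z^n)=\sum_nw_n\widehat f(n)z^{n-1}$ on Laurent expansions; "bounded" means this defines a bounded operator on the space. *)

theory Defs
  imports "HOL-Analysis.Analysis"
begin

definition fblock :: "(int \<Rightarrow> complex) \<Rightarrow> (int \<Rightarrow> complex) \<Rightarrow> int \<Rightarrow> complex \<Rightarrow> complex" where
  "fblock a b n z = (a n + b n * z) * z powi n"

definition inner_rad :: "(int \<Rightarrow> complex) \<Rightarrow> (int \<Rightarrow> complex) \<Rightarrow> ereal" where
  "inner_rad a b = limsup (\<lambda>n::nat. ereal (root n (norm (a (- int n)) + norm (b (- int n)))))"

definition inv_outer_rad :: "(int \<Rightarrow> complex) \<Rightarrow> (int \<Rightarrow> complex) \<Rightarrow> ereal" where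
  "inv_outer_rad a b = limsup (\<lambda>n::nat. ereal (root n (norm (a (int n)) + norm (b (int n)))))"

definition outer_rad :: "(int \<Rightarrow> complex) \<Rightarrow> (int \<Rightarrow> complex) \<Rightarrow> ereal" where
  "outer_rad a b = inverse (inv_outer_rad a b)"

definition annulus :: "(int \<Rightarrow> complex) \<Rightarrow> (int \<Rightarrow> complex) \<Rightarrow> complex set" where
  "annulus a b = {z. inner_rad a b < ereal (norm z) \<and> ereal (norm z) < outer_rad a b}"

definition psum :: "(int \<Rightarrow> complex) \<Rightarrow> (int \<Rightarrow> complex) \<Rightarrow> (int \<Rightarrow> complex) \<Rightarrow> nat \<Rightarrow> complex \<Rightarrow> complex" where
  "psum a b lam N z = (\<Sum>n = - int N..int N. lam n * fblock a b n z)"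

definition series_fun :: "(int \<Rightarrow> complex) \<Rightarrow> (int \<Rightarrow> complex) \<Rightarrow> (int \<Rightarrow> complex) \<Rightarrow> complex \<Rightarrow> complex" where
  "series_fun a b lam z = lim (\<lambda>N. psum a b lam N z)"

definition loc_unif_conv :: "(int \<Rightarrow> complex) \<Rightarrow> (int \<Rightarrow> complex) \<Rightarrow> (int \<Rightarrow> complex) \<Rightarrow> bool" where
  "loc_unif_conv a b lam \<longleftrightarrow>
     (\<forall>K. compact K \<and> K \<subseteq> annulus a b \<longrightarrow>
        uniform_limit K (psum a b lam) (series_fun a b lam) sequentially)"

definition lp_coeffs :: "real \<Rightarrow> (int \<Rightarrow> complex) \<Rightarrow> (int \<Rightarrow> complex) \<Rightarrow> (int \<Rightarrow> complex) \<Rightarrow> bool" where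
  "lp_coeffs p a b lam \<longleftrightarrow> (\<lambda>n. norm (lam n) powr p) summable_on UNIV \<and> loc_unif_conv a b lam"

definition lp_norm :: "real \<Rightarrow> (int \<Rightarrow> complex) \<Rightarrow> real" where
  "lp_norm p lam = (\<Sum>\<^sub>\<infinity>n. norm (lam n) powr p) powr (1 / p)"

definition c0_coeffs :: "(int \<Rightarrow> complex) \<Rightarrow> (int \<Rightarrow> complex) \<Rightarrow> (int \<Rightarrow> complex) \<Rightarrow> bool" where
  "c0_coeffs a b lam \<longleftrightarrow> (lam \<longlongrightarrow> 0) at_top \<and> (lam \<longlongrightarrow> 0) at_bot \<and> loc_unif_conv a b lam"

definition sup_norm :: "(int \<Rightarrow> complex) \<Rightarrow> real" where
  "sup_norm lam = (SUP n. norm (lam n))"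

text \<open>Laurent coefficients of a function on an annulus (unique by the Laurent theorem).\<close>
definition laurent_coeff :: "complex set \<Rightarrow> (complex \<Rightarrow> complex) \<Rightarrow> int \<Rightarrow> complex" where
  "laurent_coeff \<Omega> f = (THE c. \<forall>z\<in>\<Omega>. ((\<lambda>k. c k * z powi k) has_sum f z) UNIV)"

text \<open>The space (given by its coefficient predicate S) contains all Laurent polynomials,
  equivalently all monomials z^m.\<close>
definition contains_laurent_polys ::
  "(int \<Rightarrow> complex) \<Rightarrow> (int \<Rightarrow> complex) \<Rightarrow> ((int \<Rightarrow> complex) \<Rightarrow> bool) \<Rightarrow> bool" where
  "contains_laurent_polys a b S \<longleftrightarrow>
     (\<forall>m::int. \<exists>lam. S lam \<and> (\<forall>z\<in>annulus a b. series_fun a b lam z = z powi m))"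

text \<open>B_w is a bounded operator on the space with coefficient predicate S and norm N:
  for every f in the space, the series sum_n w_n hat f(n) z^(n-1) converges on the annulus
  to an element of the space, with norm at most C times the norm of f.\<close>
definition Bw_bounded ::
  "(int \<Rightarrow> complex) \<Rightarrow> (int \<Rightarrow> complex) \<Rightarrow> ((int \<Rightarrow> complex) \<Rightarrow> bool) \<Rightarrow> ((int \<Rightarrow> complex) \<Rightarrow> real)
    \<Rightarrow> (int \<Rightarrow> complex) \<Rightarrow> bool" where
  "Bw_bounded a b S N w \<longleftrightarrow>
     (\<exists>C. \<forall>lam. S lam \<longrightarrow>
        (\<exists>mu. S mu \<and> N mu \<le> C * N lam \<and>
          (\<forall>z\<in>annulus a b.
             ((\<lambda>n. w n * laurent_coeff (annulus a b) (series_fun a b lam) n * z powi (n - 1))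
                has_sum series_fun a b mu z) UNIV)))"

end

theory Submission
  imports Defs "HOL-Complex_Analysis.Complex_Analysis"
begin

text \<open>Apply \<open>B\<^sub>w\<close> to \<open>f\<^sub>n\<close>: the image \<open>w\<^sub>n a\<^sub>n
  z\<^sup>n\<^sup>-\<^sup>1 + w\<^sub>n\<^sub>+\<^sub>1 b\<^sub>n z\<^sup>n\<close> is \<open>\<Sum>\<^sub>k
  \<mu>\<^sub>k f\<^sub>k\<close> for a coefficient sequence \<open>\<mu>\<close> of norm at most
  \<open>C\<close>, the bound of \<open>B\<^sub>w\<close>. The Laurent coefficients of \<open>\<Sum>\<^sub>k
  \<mu>\<^sub>k f\<^sub>k\<close> are \<open>\<mu>\<^sub>k a\<^sub>k + \<mu>\<^sub>k\<^sub>-\<^sub>1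
  b\<^sub>k\<^sub>-\<^sub>1\<close>, and Laurent coefficients are unique (integrate over a circle in the
  annulus), so \<open>\<mu>\<close> is a bounded solution of \<open>\<mu>\<^sub>k a\<^sub>k +
  \<mu>\<^sub>k\<^sub>-\<^sub>1 b\<^sub>k\<^sub>-\<^sub>1 = 0\<close> for \<open>k \<le> n - 2\<close>.
  Nonzero solutions of this recurrence grow like \<open>a\<^sub>k\<^sub>+\<^sub>1\<cdots>a\<^sub>0 /
  b\<^sub>k\<cdots>b\<^sub>-\<^sub>1\<close> as \<open>k \<rightarrow> -\<infinity>\<close>, which is
  unbounded by hypothesis; hence \<open>\<mu>\<^sub>n\<^sub>-\<^sub>2 = 0\<close>, and the coefficients of
  \<open>z\<^sup>n\<^sup>-\<^sup>1\<close> and \<open>z\<^sup>n\<close> give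
  \<open>\<mu>\<^sub>n\<^sub>-\<^sub>1 = w\<^sub>n a\<^sub>n / a\<^sub>n\<^sub>-\<^sub>1\<close> and
  \<open>\<mu>\<^sub>n = c\<^sub>n\<close>, both of modulus at most \<open>C\<close>.\<close>

section \<open>Series indexed by the integers\<close>

lemma has_sum_imp_tendsto_symmetric_sums:
  fixes f :: "int \<Rightarrow> 'a::topological_comm_monoid_add"
  assumes "(f has_sum S) UNIV"
  shows "(\<lambda>N. \<Sum>k = - int N..int N. f k) \<longlonglongrightarrow> S"
proof -
  have "filterlim (\<lambda>N::nat. {- int N..int N}) (finite_subsets_at_top UNIV) sequentially"
    unfolding filterlim_finite_subsets_at_top
  proof safe
    fix X :: "int set"
    assume "finite X"
    then obtain M where M: "\<And>x. x \<in> X \<Longrightarrow> \<bar>x\<bar> \<le> M"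
      using finite_int_iff_bounded_le by blast
    show "\<forall>\<^sub>F N in sequentially. finite {- int N..int N} \<and> X \<subseteq> {- int N..int N} \<and> {- int N..int N} \<subseteq> UNIV"
      using eventually_ge_at_top[of "nat M"] by eventually_elim (auto dest!: M)
  qed
  then show ?thesis
    using assms unfolding has_sum_def by (rule filterlim_compose[rotated])
qed

lemma summable_on_int_if_halves:
  fixes g :: "int \<Rightarrow> 'a::{banach, uniform_topological_group_add}"
  assumes "(\<lambda>n. g (int n)) summable_on UNIV" and "(\<lambda>n. g (- int n)) summable_on UNIV"
  shows "g summable_on UNIV"
proof -
  have nonneg: "g summable_on range int"
    using assms(1) by (subst summable_on_reindex) (auto simp: o_def)
  have neg: "g summable_on range (\<lambda>n. - int n)"
    using assms(2) by (subst summable_on_reindex) (auto simp: o_def inj_on_def)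
  have "range int \<union> range (\<lambda>n. - int n) = UNIV"
  proof (intro set_eqI iffI)
    fix k :: int
    show "k \<in> range int \<union> range (\<lambda>n. - int n)"
      by (cases "k \<ge> 0") (auto intro!: image_eqI[of _ _ "nat \<bar>k\<bar>"])
  qed simp
  with summable_on_union[OF nonneg neg] show ?thesis
    by simp
qed

lemma uniform_limit_symmetric_sums:
  fixes f :: "int \<Rightarrow> 'a \<Rightarrow> 'b::banach"
  assumes bound: "\<And>k z. z \<in> S \<Longrightarrow> norm (f k z) \<le> G k" and G: "G summable_on UNIV"
    and sums: "\<And>z. z \<in> S \<Longrightarrow> ((\<lambda>k. f k z) has_sum F z) UNIV"
  shows "uniform_limit S (\<lambda>N z. \<Sum>k = - int N..int N. f k z) F sequentially"
proof -
  define I where "I N = {- int N..int N}" for N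
  have fin: "finite (I N)" for N
    by (simp add: I_def)
  have tail: "norm (F z - (\<Sum>k\<in>I N. f k z)) \<le> infsum G UNIV - sum G (I N)" if z: "z \<in> S" for z N
  proof -
    have G_tail: "G summable_on (- I N)"
      using G summable_on_subset_banach by blast
    have norm_tail: "(\<lambda>k. norm (f k z)) summable_on (- I N)"
      by (rule summable_on_comparison_test[OF G_tail]) (use bound z in auto)
    have "((\<lambda>k. f k z) has_sum (F z - (\<Sum>k\<in>I N. f k z))) (UNIV - I N)"
      by (rule has_sum_Diff[OF sums[OF z] has_sum_finite[OF fin]]) simp
    then have "norm (F z - (\<Sum>k\<in>I N. f k z)) = norm (infsum (\<lambda>k. f k z) (- I N))"
      by (simp add: infsumI Compl_eq_Diff_UNIV)
    also have "\<dots> \<le> infsum (\<lambda>k. norm (f k z)) (- I N)"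
      by (rule norm_infsum_bound) (use norm_tail in simp)
    also have "\<dots> \<le> infsum G (- I N)"
      by (rule infsum_mono[OF norm_tail G_tail]) (use bound z in auto)
    also have "\<dots> = infsum G UNIV - sum G (I N)"
      using infsum_Diff[OF G summable_on_finite[OF fin]] fin
      by (simp add: Compl_eq_Diff_UNIV)
    finally show ?thesis .
  qed
  have lim: "(\<lambda>N. sum G (I N)) \<longlonglongrightarrow> infsum G UNIV"
    unfolding I_def using G by (intro has_sum_imp_tendsto_symmetric_sums has_sum_infsum)
  show ?thesis
    unfolding uniform_limit_iff I_def[symmetric]
  proof (intro allI impI)
    fix e :: real
    assume "e > 0"
    show "\<forall>\<^sub>F N in sequentially. \<forall>z\<in>S. dist (\<Sum>k\<in>I N. f k z) (F z) < e"
      using tendstoD[OF lim \<open>e > 0\<close>]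
    proof eventually_elim
      case (elim N)
      show ?case
      proof
        fix z
        assume "z \<in> S"
        with tail[of z N] elim show "dist (\<Sum>k\<in>I N. f k z) (F z) < e"
          by (simp add: dist_norm dist_real_def norm_minus_commute)
      qed
    qed
  qed
qed

section \<open>Uniqueness of Laurent coefficients\<close>

lemma has_contour_integral_power_int_circlepath:
  assumes "\<rho> > 0"
  shows "((\<lambda>z. z powi j) has_contour_integral (if j = -1 then 2 * pi * \<i> else 0)) (circlepath 0 \<rho>)"
proof (cases "j = -1")
  case True
  have "((\<lambda>z. 1 / (z - 0)) has_contour_integral (2 * pi * \<i> * 1)) (circlepath 0 \<rho>)"
    using Cauchy_integral_circlepath_simple[of "\<lambda>z. 1" 0 \<rho> 0] assms by simp
  then show ?thesis
    using True by (simp add: power_int_minus divide_inverse)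
next
  case False
  then have j1: "(of_int (j + 1) :: complex) \<noteq> 0"
    by (simp only: of_int_eq_0_iff)
  have "((\<lambda>z. z powi j) has_contour_integral 0) (circlepath 0 \<rho>)"
  proof (rule Cauchy_theorem_primitive[where S = "- {0}" and f = "\<lambda>z. z powi (j + 1) / of_int (j + 1)"])
    fix x :: complex
    assume "x \<in> - {0}"
    then have "((\<lambda>z. z powi (j + 1) / of_int (j + 1)) has_field_derivative
        (of_int (j + 1) * x powi (j + 1 - 1) * 1) / of_int (j + 1)) (at x within - {0})"
      by (intro DERIV_cdivide DERIV_power_int DERIV_ident) auto
    then show "((\<lambda>z. z powi (j + 1) / of_int (j + 1)) has_field_derivative x powi j) (at x within - {0})"
      using j1 by simp
  qed (use assms in auto)
  then show ?thesis
    using False by simp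
qed

lemma laurent_coeff_contour_integral:
  fixes c :: "int \<Rightarrow> complex"
  assumes \<rho>: "\<rho> > 0" and sums: "\<And>z. norm z = \<rho> \<Longrightarrow> ((\<lambda>k. c k * z powi k) has_sum f z) UNIV"
  shows "((\<lambda>z. f z * z powi (- m - 1)) has_contour_integral (2 * pi * \<i> * c m)) (circlepath 0 \<rho>)"
proof -
  define G where "G k = norm (c k) * \<rho> powi k" for k
  have "(\<lambda>k. c k * of_real \<rho> powi k) summable_on UNIV"
    using sums[of "of_real \<rho>"] \<rho> by (auto simp: summable_on_def)
  then have G: "G summable_on UNIV"
    using \<rho> by (simp add: summable_on_iff_abs_summable_on_complex G_def[abs_def] norm_mult norm_power_int)
  define P where "P N z = (\<Sum>k = - int N..int N. c k * z powi (k - m - 1))" for N z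
  have shift: "z powi (k - m - 1) = z powi k * z powi (- m - 1)" if "z \<noteq> 0" for z :: complex and k
    using that power_int_add[of z k "- m - 1"] by (simp add: algebra_simps)
  have ul: "uniform_limit (sphere 0 \<rho>) P (\<lambda>z. f z * z powi (- m - 1)) sequentially"
    unfolding P_def
  proof (rule uniform_limit_symmetric_sums)
    show "(\<lambda>k. G k * \<rho> powi (- m - 1)) summable_on UNIV"
      using G by (rule summable_on_cmult_left)
    fix k and z :: complex
    assume "z \<in> sphere 0 \<rho>"
    then have z: "norm z = \<rho>" "z \<noteq> 0"
      using \<rho> by auto
    show "norm (c k * z powi (k - m - 1)) \<le> G k * \<rho> powi (- m - 1)"
      using z by (simp add: shift G_def norm_mult norm_power_int)
    show "((\<lambda>k. c k * z powi (k - m - 1)) has_sum f z * z powi (- m - 1)) UNIV"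
      using has_sum_cmult_left[OF sums[OF z(1)], of "z powi (- m - 1)"] z
      by (simp add: shift mult.assoc)
  qed
  have partial_integral: "(P N has_contour_integral (if m \<in> {- int N..int N} then 2 * pi * \<i> * c m else 0))
      (circlepath 0 \<rho>)" for N
  proof -
    have "(P N has_contour_integral
        (\<Sum>k = - int N..int N. c k * (if k - m - 1 = -1 then 2 * pi * \<i> else 0))) (circlepath 0 \<rho>)"
      unfolding P_def
      by (intro has_contour_integral_sum has_contour_integral_lmul
          has_contour_integral_power_int_circlepath \<rho>) simp
    also have "(\<Sum>k = - int N..int N. c k * (if k - m - 1 = -1 then 2 * pi * \<i> else 0)) =
        (\<Sum>k = - int N..int N. if k = m then 2 * pi * \<i> * c m else 0)"
      by (rule sum.cong) auto
    finally show ?thesis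
      by simp
  qed
  have "\<forall>\<^sub>F N in sequentially. P N contour_integrable_on circlepath 0 \<rho>"
    by (intro always_eventually allI has_contour_integral_integrable[OF partial_integral])
  note limit = contour_integral_uniform_limit_circlepath[OF this ul trivial_limit_sequentially \<rho>]
  have "\<forall>\<^sub>F N in sequentially. contour_integral (circlepath 0 \<rho>) (P N) = 2 * pi * \<i> * c m"
    using eventually_ge_at_top[of "nat \<bar>m\<bar>"]
  proof eventually_elim
    case (elim N)
    then have "m \<in> {- int N..int N}"
      by auto
    then show ?case
      using contour_integral_unique[OF partial_integral[of N]] by simp
  qed
  then have "(\<lambda>N. contour_integral (circlepath 0 \<rho>) (P N)) \<longlonglongrightarrow> 2 * pi * \<i> * c m"
    by (rule tendsto_eventually)
  with limit(2) have "contour_integral (circlepath 0 \<rho>) (\<lambda>z. f z * z powi (- m - 1)) = 2 * pi * \<i> * c m"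
    by (rule LIMSEQ_unique)
  with has_contour_integral_integral[OF limit(1)] show ?thesis
    by simp
qed

lemma laurent_coeffs_unique:
  fixes c c' :: "int \<Rightarrow> complex"
  assumes \<rho>: "\<rho> > 0"
    and "\<And>z. norm z = \<rho> \<Longrightarrow> ((\<lambda>k. c k * z powi k) has_sum f z) UNIV"
    and "\<And>z. norm z = \<rho> \<Longrightarrow> ((\<lambda>k. c' k * z powi k) has_sum f z) UNIV"
  shows "c = c'"
proof
  fix m
  have "2 * pi * \<i> * c m = 2 * pi * \<i> * c' m"
    by (rule has_contour_integral_unique[OF laurent_coeff_contour_integral laurent_coeff_contour_integral])
      (use \<rho> assms in auto)
  then show "c m = c' m"
    by simp
qed

lemma laurent_coeff_eqI:
  fixes c :: "int \<Rightarrow> complex"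
  assumes \<rho>: "\<rho> > 0" and circle: "\<And>z. norm z = \<rho> \<Longrightarrow> z \<in> \<Omega>"
    and sums: "\<And>z. z \<in> \<Omega> \<Longrightarrow> ((\<lambda>k. c k * z powi k) has_sum f z) UNIV"
  shows "laurent_coeff \<Omega> f = c"
  unfolding laurent_coeff_def
proof (rule the_equality)
  show "\<forall>z\<in>\<Omega>. ((\<lambda>k. c k * z powi k) has_sum f z) UNIV"
    using sums by blast
  fix c'
  assume "\<forall>z\<in>\<Omega>. ((\<lambda>k. c' k * z powi k) has_sum f z) UNIV"
  then show "c' = c"
    using laurent_coeffs_unique[OF \<rho>, of c' f c] circle sums by blast
qed

section \<open>Laurent expansion of the series on the annulus\<close>

lemma inner_rad_nonneg: "inner_rad a b \<ge> 0"
  unfolding inner_rad_def by (rule le_Limsup) (auto simp: real_root_ge_zero)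

lemma inv_outer_rad_nonneg: "inv_outer_rad a b \<ge> 0"
  unfolding inv_outer_rad_def by (rule le_Limsup) (auto simp: real_root_ge_zero)

lemma annulus_nonzero: "z \<in> annulus a b \<Longrightarrow> z \<noteq> 0"
  using inner_rad_nonneg[of a b] by (auto simp: annulus_def zero_ereal_def)

lemma circle_in_annulus:
  assumes "inner_rad a b < outer_rad a b"
  obtains \<rho> where "\<rho> > 0" and "\<And>z. norm z = \<rho> \<Longrightarrow> z \<in> annulus a b"
proof -
  obtain \<rho> where \<rho>: "inner_rad a b < ereal \<rho>" "ereal \<rho> < outer_rad a b"
    using ereal_dense2[OF assms] by blast
  have "0 < ereal \<rho>"
    using inner_rad_nonneg[of a b] \<rho>(1) by (rule order.strict_trans1)
  with \<rho> show ?thesis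
    using that by (auto simp: annulus_def)
qed

lemma summable_on_if_limsup_root_mult_less_1:
  fixes x :: "nat \<Rightarrow> real"
  assumes x: "\<And>n. x n \<ge> 0" and t: "t \<ge> 0"
    and less: "limsup (\<lambda>n. ereal (root n (x n))) * ereal t < 1"
  shows "(\<lambda>n. x n * t ^ n) summable_on UNIV"
proof (rule summable_nonneg_imp_summable_on)
  have "root n (norm (x n * t ^ n)) = root n (x n) * t" for n
    using x t by (cases "n = 0") (simp_all add: real_root_mult real_root_power_cancel abs_mult)
  then have "(\<lambda>n. ereal (root n (norm (x n * t ^ n)))) = (\<lambda>n. ereal (root n (x n)) * ereal t)"
    by simp
  then have "limsup (\<lambda>n. ereal (root n (norm (x n * t ^ n)))) < 1"
    by (simp only: limsup_ereal_mult_right[OF t] less)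
  then show "summable (\<lambda>n. x n * t ^ n)"
    by (rule root_test_convergence')
qed (use x t in simp)

lemma summable_on_coeff_norms_annulus:
  assumes z: "z \<in> annulus a b" and fin: "inv_outer_rad a b \<noteq> \<infinity>"
  shows "(\<lambda>k. (norm (a k) + norm (b k)) * norm z powi k) summable_on UNIV"
proof (rule summable_on_int_if_halves)
  have z0: "norm z > 0"
    using annulus_nonzero[OF z] by simp
  obtain l where l: "inv_outer_rad a b = ereal l" "l \<ge> 0"
    using fin inv_outer_rad_nonneg[of a b] by (cases "inv_outer_rad a b") auto
  have "l * norm z < 1"
  proof (cases "l = 0")
    case False
    with z l have "norm z < 1 / l"
      by (simp add: annulus_def outer_rad_def inverse_eq_divide)
    with False l show ?thesis
      by (simp add: field_simps)
  qed simp
  then have "(\<lambda>n. (norm (a (int n)) + norm (b (int n))) * norm z ^ n) summable_on UNIV"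
    using l by (intro summable_on_if_limsup_root_mult_less_1) (simp_all add: inv_outer_rad_def[symmetric])
  then show "(\<lambda>n. (norm (a (int n)) + norm (b (int n))) * norm z powi int n) summable_on UNIV"
    by simp
  obtain r where r: "inner_rad a b = ereal r"
    using inner_rad_nonneg[of a b] z by (cases "inner_rad a b") (auto simp: annulus_def)
  have "r * (1 / norm z) < 1"
    using z z0 r by (simp add: annulus_def field_simps)
  then have "(\<lambda>n. (norm (a (- int n)) + norm (b (- int n))) * (1 / norm z) ^ n) summable_on UNIV"
    using r by (intro summable_on_if_limsup_root_mult_less_1) (simp_all add: inner_rad_def[symmetric])
  then show "(\<lambda>n. (norm (a (- int n)) + norm (b (- int n))) * norm z powi - int n) summable_on UNIV"
    by (simp add: power_int_minus power_one_over divide_inverse power_inverse)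
qed

lemma summable_on_bounded_coeffs_annulus:
  assumes z: "z \<in> annulus a b" and fin: "inv_outer_rad a b \<noteq> \<infinity>"
    and bounded: "\<And>k. norm (lam k) \<le> B"
  shows "(\<lambda>k. lam k * a k * z powi k) summable_on UNIV"
    and "(\<lambda>k. lam k * b k * z powi k) summable_on UNIV"
proof -
  have "B \<ge> 0"
    using bounded[of 0] norm_ge_zero order_trans by blast
  have g: "(\<lambda>k. B * ((norm (a k) + norm (b k)) * norm z powi k)) summable_on UNIV"
    using summable_on_coeff_norms_annulus[OF z fin] by (rule summable_on_cmult_right)
  have "(\<lambda>k. lam k * c k * z powi k) summable_on UNIV"
    if c: "\<And>k. norm (c k) \<le> norm (a k) + norm (b k)" for c
  proof -
    have "(\<lambda>k. norm (lam k * c k * z powi k)) summable_on UNIV"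
    proof (rule summable_on_comparison_test[OF g])
      show "norm (lam k * c k * z powi k) \<le> B * ((norm (a k) + norm (b k)) * norm z powi k)" for k
        unfolding norm_mult norm_power_int mult.assoc[symmetric]
        by (intro mult_right_mono mult_mono bounded c) (use \<open>B \<ge> 0\<close> in auto)
    qed simp
    then show ?thesis
      by (simp add: summable_on_iff_abs_summable_on_complex)
  qed
  then show "(\<lambda>k. lam k * a k * z powi k) summable_on UNIV"
    and "(\<lambda>k. lam k * b k * z powi k) summable_on UNIV"
    by auto
qed

text \<open>Split every \<open>f\<^sub>k\<close> into its two monomials and shift the index of the second sum.\<close>
lemma series_fun_laurent_expansion:
  assumes z: "z \<in> annulus a b" and fin: "inv_outer_rad a b \<noteq> \<infinity>"
    and bounded: "\<And>k. norm (lam k) \<le> B"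
  shows "((\<lambda>k. (lam k * a k + lam (k - 1) * b (k - 1)) * z powi k) has_sum series_fun a b lam z) UNIV"
proof -
  have z0: "z \<noteq> 0"
    using annulus_nonzero[OF z] .
  define u where "u k = lam k * a k * z powi k" for k
  define v where "v k = lam k * b k * z powi k * z" for k
  obtain U where U: "(u has_sum U) UNIV"
    using summable_on_bounded_coeffs_annulus(1)[where lam = lam, OF z fin bounded]
    unfolding summable_on_def u_def[abs_def] by blast
  obtain V where "((\<lambda>k. lam k * b k * z powi k) has_sum V) UNIV"
    using summable_on_bounded_coeffs_annulus(2)[where lam = lam, OF z fin bounded]
    unfolding summable_on_def by blast
  then have V: "(v has_sum V * z) UNIV"
    unfolding v_def by (rule has_sum_cmult_left)
  then have V_shifted: "((\<lambda>k. v (k - 1)) has_sum V * z) UNIV"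
    using has_sum_reindex_bij_witness[of UNIV "\<lambda>k. k + 1" "\<lambda>k. k - 1" UNIV v "\<lambda>k. v (k - 1)"]
    by simp
  have "((\<lambda>k. u k + v k) has_sum U + V * z) UNIV"
    using U V by (rule has_sum_add)
  moreover have "u k + v k = lam k * fblock a b k z" for k
    by (simp add: u_def v_def fblock_def algebra_simps)
  ultimately have "(\<lambda>N. psum a b lam N z) \<longlonglongrightarrow> U + V * z"
    unfolding psum_def by (simp add: has_sum_imp_tendsto_symmetric_sums)
  then have "series_fun a b lam z = U + V * z"
    unfolding series_fun_def by (rule limI)
  moreover have "((\<lambda>k. u k + v (k - 1)) has_sum U + V * z) UNIV"
    using U V_shifted by (rule has_sum_add)
  moreover have "u k + v (k - 1) = (lam k * a k + lam (k - 1) * b (k - 1)) * z powi k" for k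
    using z0 by (simp add: u_def v_def mult.assoc power_int_minus_mult distrib_right)
  ultimately show ?thesis
    by simp
qed

section \<open>A two-term recurrence\<close>

lemma norm_two_term_recurrence_solution:
  fixes mu a b :: "int \<Rightarrow> complex"
  assumes rec: "\<And>k. k \<le> m \<Longrightarrow> mu k * a k + mu (k - 1) * b (k - 1) = 0" and "j \<le> m"
  shows "norm (mu j) * norm (\<Prod>k = j..m - 1. b k) = norm (mu m) * norm (\<Prod>k = j + 1..m. a k)"
  using \<open>j \<le> m\<close>
proof (induction j rule: int_le_induct)
  case base
  then show ?case
    by simp
next
  case (step i)
  have "mu i * a i = - (mu (i - 1) * b (i - 1))"
    using rec[OF step.hyps(1)] by (simp add: eq_neg_iff_add_eq_0)
  then have rec_norm: "norm (mu (i - 1)) * norm (b (i - 1)) = norm (mu i) * norm (a i)"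
    by (metis norm_minus_cancel norm_mult)
  have "{i - 1..m - 1} = insert (i - 1) {i..m - 1}" "{i..m} = insert i {i + 1..m}"
    using step.hyps(1) by auto
  then have "norm (mu (i - 1)) * norm (\<Prod>k = i - 1..m - 1. b k)
      = norm (mu (i - 1)) * norm (b (i - 1)) * norm (\<Prod>k = i..m - 1. b k)"
    and "norm (\<Prod>k = i..m. a k) = norm (a i) * norm (\<Prod>k = i + 1..m. a k)"
    by (simp_all add: norm_mult)
  with rec_norm step.IH show ?case
    by (simp add: mult_ac)
qed

lemma SUP_eq_infinity_imp_unbounded_below:
  fixes f :: "int \<Rightarrow> real"
  assumes "(SUP j\<in>{..-1}. ereal (f j)) = \<infinity>"
  shows "\<exists>j\<le>m. f j > K"
proof (rule ccontr)
  assume "\<not> (\<exists>j\<le>m. f j > K)"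
  then have small: "f j \<le> K" if "j \<le> m" for j
    using that by (simp add: not_less)
  have "f j \<le> \<bar>K\<bar> + (\<Sum>i\<in>{m<..-1}. \<bar>f i\<bar>)" if "j \<le> -1" for j
  proof -
    have "f j \<le> \<bar>K\<bar> \<or> \<bar>f j\<bar> \<le> (\<Sum>i\<in>{m<..-1}. \<bar>f i\<bar>)"
    proof (cases "j \<le> m")
      case False
      with that show ?thesis
        by (intro disjI2 member_le_sum) auto
    qed (use small in force)
    moreover have "(\<Sum>i\<in>{m<..-1}. \<bar>f i\<bar>) \<ge> 0"
      by (simp add: sum_nonneg)
    ultimately show ?thesis
      by linarith
  qed
  then have "(SUP j\<in>{..-1}. ereal (f j)) \<le> ereal (\<bar>K\<bar> + (\<Sum>i\<in>{m<..-1}. \<bar>f i\<bar>))"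
    by (intro SUP_least) auto
  with assms show False
    by simp
qed

lemma bounded_recurrence_solution_prod_quotient_le:
  fixes mu a b :: "int \<Rightarrow> complex"
  assumes rec: "\<And>k. k \<le> m \<Longrightarrow> mu k * a k + mu (k - 1) * b (k - 1) = 0"
    and bounded: "\<And>k. norm (mu k) \<le> B" and nz: "mu m \<noteq> 0" and "j \<le> m" "m \<le> 0"
  shows "norm ((\<Prod>k = j + 1..0. a k) / (\<Prod>k = j..-1. b k))
    \<le> B / norm (mu m) * norm ((\<Prod>k = m + 1..0. a k) / (\<Prod>k = m..-1. b k))"
proof -
  define A where "A = (\<Prod>k = j + 1..m. a k)"
  define D where "D = (\<Prod>k = j..m - 1. b k)"
  have "{j + 1..0} = {j + 1..m} \<union> {m + 1..0}" "{j..-1} = {j..m - 1} \<union> {m..-1}"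
    using \<open>j \<le> m\<close> \<open>m \<le> 0\<close> by auto
  then have split: "norm ((\<Prod>k = j + 1..0. a k) / (\<Prod>k = j..-1. b k))
      = norm A / norm D * norm ((\<Prod>k = m + 1..0. a k) / (\<Prod>k = m..-1. b k))"
    by (simp add: A_def D_def prod.union_disjoint ivl_disj_int norm_mult norm_divide)
  show ?thesis
  proof (cases "D = 0")
    case False
    have "norm (mu j) * norm D = norm (mu m) * norm A"
      unfolding A_def D_def using rec \<open>j \<le> m\<close> by (rule norm_two_term_recurrence_solution)
    then have "norm A / norm D = norm (mu j) / norm (mu m)"
      using False nz by (simp add: field_simps)
    also have "\<dots> \<le> B / norm (mu m)"
      using bounded[of j] by (simp add: divide_right_mono)
    finally show ?thesis
      unfolding split by (rule mult_right_mono) simp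
  next
    case True
    have "B \<ge> 0"
      using bounded[of 0] norm_ge_zero order_trans by blast
    then show ?thesis
      unfolding split True by simp
  qed
qed

lemma bounded_recurrence_solution_eq_0:
  fixes mu a b :: "int \<Rightarrow> complex"
  assumes a_nz: "\<And>n. a n \<noteq> 0"
    and growth: "(SUP n\<in>{..-1::int}. ereal (norm ((\<Prod>k\<in>{n+1..0}. a k) / (\<Prod>k\<in>{n..-1}. b k)))) = \<infinity>"
    and bounded: "\<And>k. norm (mu k) \<le> B"
    and rec: "\<And>k. k \<le> M \<Longrightarrow> mu k * a k + mu (k - 1) * b (k - 1) = 0"
  shows "mu M = 0"
proof -
  define m where "m = min M 0"
  have "mu m = 0"
  proof (rule ccontr)
    assume nz: "mu m \<noteq> 0"
    define P where "P j = norm ((\<Prod>k = j + 1..0. a k) / (\<Prod>k = j..-1. b k))" for j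
    obtain j where "j \<le> m" "P j > B / norm (mu m) * P m"
      using SUP_eq_infinity_imp_unbounded_below[of P] growth by (auto simp: P_def)
    moreover have "P j \<le> B / norm (mu m) * P m"
      unfolding P_def
      by (rule bounded_recurrence_solution_prod_quotient_le[where mu = mu, OF _ bounded nz \<open>j \<le> m\<close>])
        (simp_all add: rec m_def)
    ultimately show False
      by simp
  qed
  have "mu i = 0" if "m \<le> i" "i \<le> M" for i
    using that
  proof (induction i rule: int_ge_induct)
    case (step i)
    then have "mu (i + 1) * a (i + 1) = 0"
      using rec[of "i + 1"] by simp
    then show ?case
      using a_nz by simp
  qed (use \<open>mu m = 0\<close> in simp)
  then show ?thesis
    by (simp add: m_def)
qed

definition basis_seq :: "int \<Rightarrow> int \<Rightarrow> complex" where
  "basis_seq n k = (if k = n then 1 else 0)"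

lemma psum_basis_seq:
  assumes "nat \<bar>n\<bar> \<le> N"
  shows "psum a b (basis_seq n) N z = fblock a b n z"
proof -
  have "psum a b (basis_seq n) N z = (\<Sum>k = - int N..int N. if k = n then fblock a b k z else 0)"
    unfolding psum_def basis_seq_def by (rule sum.cong) auto
  moreover have "n \<in> {- int N..int N}"
    using assms by auto
  ultimately show ?thesis
    by simp
qed

lemma series_fun_basis_seq: "series_fun a b (basis_seq n) z = fblock a b n z"
proof -
  have "\<forall>\<^sub>F N in sequentially. psum a b (basis_seq n) N z = fblock a b n z"
    using eventually_ge_at_top[of "nat \<bar>n\<bar>"] by eventually_elim (rule psum_basis_seq)
  then have "(\<lambda>N. psum a b (basis_seq n) N z) \<longlonglongrightarrow> fblock a b n z"
    by (rule tendsto_eventually)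
  then show ?thesis
    unfolding series_fun_def by (rule limI)
qed

lemma loc_unif_conv_basis_seq: "loc_unif_conv a b (basis_seq n)"
  unfolding loc_unif_conv_def uniform_limit_iff series_fun_basis_seq
  by (auto intro: eventually_mono[OF eventually_ge_at_top[of "nat \<bar>n\<bar>"]] simp: psum_basis_seq)

lemma has_sum_basis_seq_powr: "((\<lambda>k. norm (basis_seq n k) powr p) has_sum 1) UNIV"
  by (rule has_sum_finite_neutralI[of "{n}"]) (auto simp: basis_seq_def)

lemma lp_coeffs_basis_seq: "lp_coeffs p a b (basis_seq n)"
  using has_sum_basis_seq_powr loc_unif_conv_basis_seq
  unfolding lp_coeffs_def summable_on_def by blast

lemma lp_norm_basis_seq: "lp_norm p (basis_seq n) = 1"
proof -
  have "(\<Sum>\<^sub>\<infinity>k. norm (basis_seq n k) powr p) = 1"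
    by (rule infsumI[OF has_sum_basis_seq_powr])
  then show ?thesis
    by (simp add: lp_norm_def)
qed

lemma norm_le_lp_norm:
  assumes "lp_coeffs p a b lam" and "p > 0"
  shows "norm (lam k) \<le> lp_norm p lam"
proof -
  have "(\<lambda>n. norm (lam n) powr p) summable_on UNIV"
    using assms(1) by (simp add: lp_coeffs_def)
  then have "infsum (\<lambda>n. norm (lam n) powr p) {k} \<le> infsum (\<lambda>n. norm (lam n) powr p) UNIV"
    by (intro infsum_mono_neutral) auto
  then have "(norm (lam k) powr p) powr (1 / p) \<le> lp_norm p lam"
    unfolding lp_norm_def using assms(2) by (intro powr_mono2) auto
  with assms(2) show ?thesis
    by (simp add: powr_powr)
qed

lemma c0_coeffs_basis_seq: "c0_coeffs a b (basis_seq n)"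
proof -
  have "\<forall>\<^sub>F k in at_top. basis_seq n k = 0"
    unfolding eventually_at_top_linorder by (auto simp: basis_seq_def intro!: exI[of _ "n + 1"])
  moreover have "\<forall>\<^sub>F k in at_bot. basis_seq n k = 0"
    unfolding eventually_at_bot_linorder by (auto simp: basis_seq_def intro!: exI[of _ "n - 1"])
  ultimately show ?thesis
    unfolding c0_coeffs_def using loc_unif_conv_basis_seq
    by (auto intro: tendsto_eventually)
qed

lemma sup_norm_basis_seq: "sup_norm (basis_seq n) = 1"
  unfolding sup_norm_def basis_seq_def
  by (rule cSup_eq_maximum) (auto intro!: image_eqI[of _ _ n])

lemma c0_coeffs_bounded:
  assumes "c0_coeffs a b lam"
  shows "bdd_above (range (\<lambda>k. norm (lam k)))"
proof -
  have "\<forall>\<^sub>F k in at_top. norm (lam k) < 1" "\<forall>\<^sub>F k in at_bot. norm (lam k) < 1"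
    using assms tendstoD[of lam 0 _ 1] by (auto simp: c0_coeffs_def)
  then obtain K1 K2 where K1: "\<And>k. k \<ge> K1 \<Longrightarrow> norm (lam k) < 1"
    and K2: "\<And>k. k \<le> K2 \<Longrightarrow> norm (lam k) < 1"
    unfolding eventually_at_top_linorder eventually_at_bot_linorder by blast
  have "norm (lam k) \<le> 1 + (\<Sum>i = K2..K1. norm (lam i))" for k
  proof (cases "K2 < k \<and> k < K1")
    case True
    then have "norm (lam k) \<le> (\<Sum>i = K2..K1. norm (lam i))"
      by (intro member_le_sum) auto
    then show ?thesis
      by linarith
  next
    case False
    then have "norm (lam k) < 1"
      using K1 K2 by force
    moreover have "(\<Sum>i = K2..K1. norm (lam i)) \<ge> 0"
      by (simp add: sum_nonneg)
    ultimately show ?thesis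
      by linarith
  qed
  then show ?thesis
    by (intro bdd_aboveI2)
qed

lemma norm_le_sup_norm: "c0_coeffs a b lam \<Longrightarrow> norm (lam k) \<le> sup_norm lam"
  unfolding sup_norm_def by (rule cSUP_upper[OF UNIV_I c0_coeffs_bounded])

lemma laurent_coeff_basis_seq:
  assumes "inv_outer_rad a b \<noteq> \<infinity>" and "inner_rad a b < outer_rad a b"
  shows "laurent_coeff (annulus a b) (series_fun a b (basis_seq n))
    = (\<lambda>k. basis_seq n k * a k + basis_seq n (k - 1) * b (k - 1))"
proof -
  obtain \<rho> where "\<rho> > 0" "\<And>z. norm z = \<rho> \<Longrightarrow> z \<in> annulus a b"
    using circle_in_annulus[OF assms(2)] by blast
  moreover have "norm (basis_seq n k) \<le> 1" for k
    by (simp add: basis_seq_def)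
  ultimately show ?thesis
    by (intro laurent_coeff_eqI series_fun_laurent_expansion[OF _ assms(1)])
qed

section \<open>Bounded weighted backward shifts\<close>

lemma Bw_basis_seq_coeffs:
  fixes mu :: "int \<Rightarrow> complex"
  assumes a_nz: "\<And>n. a n \<noteq> 0"
    and growth: "(SUP n\<in>{..-1::int}. ereal (norm ((\<Prod>k\<in>{n+1..0}. a k) / (\<Prod>k\<in>{n..-1}. b k)))) = \<infinity>"
    and fin: "inv_outer_rad a b \<noteq> \<infinity>" and r_lt_R: "inner_rad a b < outer_rad a b"
    and bounded: "\<And>k. norm (mu k) \<le> B"
    and image: "\<And>z. z \<in> annulus a b \<Longrightarrow>
      ((\<lambda>k. w k * laurent_coeff (annulus a b) (series_fun a b (basis_seq n)) k * z powi (k - 1))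
        has_sum series_fun a b mu z) UNIV"
  shows "mu (n - 1) = w n * a n / a (n - 1)"
    and "mu n = w (n + 1) * b n / a n - w n * b (n - 1) / a (n - 1)"
proof -
  obtain \<rho> where \<rho>: "\<rho> > 0" and circle: "\<And>z. norm z = \<rho> \<Longrightarrow> z \<in> annulus a b"
    using circle_in_annulus[OF r_lt_R] by blast
  define L where "L k = basis_seq n k * a k + basis_seq n (k - 1) * b (k - 1)" for k
  have shifted: "((\<lambda>k. w (k + 1) * L (k + 1) * z powi k) has_sum series_fun a b mu z) UNIV"
    if "z \<in> annulus a b" for z
    using image[OF that] has_sum_reindex_bij_witness[of UNIV "\<lambda>k. k - 1" "\<lambda>k. k + 1" UNIV
        "\<lambda>k. w k * L k * z powi (k - 1)" "\<lambda>k. w (k + 1) * L (k + 1) * z powi k"]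
    unfolding laurent_coeff_basis_seq[OF fin r_lt_R] L_def[symmetric] by simp
  have "(\<lambda>k. mu k * a k + mu (k - 1) * b (k - 1)) = (\<lambda>k. w (k + 1) * L (k + 1))"
    using series_fun_laurent_expansion[OF circle fin bounded] shifted[OF circle]
    by (rule laurent_coeffs_unique[OF \<rho>])
  then have coeffs: "mu k * a k + mu (k - 1) * b (k - 1) = w (k + 1) * L (k + 1)" for k
    by (rule fun_cong)
  have "mu (n - 2) = 0"
    by (rule bounded_recurrence_solution_eq_0[OF a_nz growth bounded])
      (simp add: coeffs L_def basis_seq_def)
  with coeffs[of "n - 1"] have "mu (n - 1) * a (n - 1) = w n * a n"
    by (simp add: L_def basis_seq_def)
  with a_nz[of "n - 1"] show mu_pred: "mu (n - 1) = w n * a n / a (n - 1)"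
    by (simp add: field_simps)
  have "mu n * a n + mu (n - 1) * b (n - 1) = w (n + 1) * b n"
    using coeffs[of n] by (simp add: L_def basis_seq_def)
  with a_nz[of n] show "mu n = w (n + 1) * b n / a n - w n * b (n - 1) / a (n - 1)"
    unfolding mu_pred by (simp add: field_simps)
qed

lemma Bw_bounded_imp_weights_bounded:
  fixes S :: "(int \<Rightarrow> complex) \<Rightarrow> bool" and norm_S :: "(int \<Rightarrow> complex) \<Rightarrow> real"
  assumes a_nz: "\<And>n. a n \<noteq> 0"
    and growth: "(SUP n\<in>{..-1::int}. ereal (norm ((\<Prod>k\<in>{n+1..0}. a k) / (\<Prod>k\<in>{n..-1}. b k)))) = \<infinity>"
    and fin: "inv_outer_rad a b \<noteq> \<infinity>" and r_lt_R: "inner_rad a b < outer_rad a b"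
    and S_basis: "\<And>n. S (basis_seq n)" and norm_S_basis: "\<And>n. norm_S (basis_seq n) = 1"
    and norm_le: "\<And>lam k. S lam \<Longrightarrow> norm (lam k) \<le> norm_S lam"
    and Bw: "Bw_bounded a b S norm_S w"
  shows "bounded (range (\<lambda>n. w (n+1) * a (n+1) / a n))
    \<and> bounded (range (\<lambda>n. w (n+1) * b n / a n - w n * b (n-1) / a (n-1)))"
proof -
  obtain C where C: "\<And>lam. S lam \<Longrightarrow> \<exists>mu. S mu \<and> norm_S mu \<le> C * norm_S lam \<and>
      (\<forall>z\<in>annulus a b. ((\<lambda>n. w n * laurent_coeff (annulus a b) (series_fun a b lam) n * z powi (n - 1))
        has_sum series_fun a b mu z) UNIV)"
    using Bw unfolding Bw_bounded_def by blast
  have bound: "norm (w n * a n / a (n - 1)) \<le> C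
      \<and> norm (w (n + 1) * b n / a n - w n * b (n - 1) / a (n - 1)) \<le> C" for n
  proof -
    obtain mu where mu: "S mu" "norm_S mu \<le> C"
      and image: "\<forall>z\<in>annulus a b. ((\<lambda>k. w k * laurent_coeff (annulus a b) (series_fun a b (basis_seq n)) k
        * z powi (k - 1)) has_sum series_fun a b mu z) UNIV"
      using C[OF S_basis[of n]] norm_S_basis[of n] by auto
    note coeffs = Bw_basis_seq_coeffs[OF a_nz growth fin r_lt_R norm_le[OF mu(1)] image[rule_format]]
    have "norm (mu (n - 1)) \<le> C" "norm (mu n) \<le> C"
      using norm_le[OF mu(1)] mu(2) by (meson order_trans)+
    with coeffs show ?thesis
      by simp
  qed
  show ?thesis
  proof
    show "bounded (range (\<lambda>n. w (n+1) * a (n+1) / a n))"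
      unfolding bounded_iff using bound[of "_ + 1", THEN conjunct1] by auto
    show "bounded (range (\<lambda>n. w (n+1) * b n / a n - w n * b (n-1) / a (n-1)))"
      unfolding bounded_iff using bound[THEN conjunct2] by blast
  qed
qed

theorem proposition3p2:
  fixes a b w :: "int \<Rightarrow> complex" and p :: real
  assumes a_nz: "\<And>n. a n \<noteq> 0"
    and sup_inf: "(SUP n\<in>{..-1::int}. ereal (norm ((\<Prod>k\<in>{n+1..0}. a k) / (\<Prod>k\<in>{n..-1}. b k)))) = \<infinity>"
    and invR_fin: "inv_outer_rad a b \<noteq> \<infinity>"
    and r_lt_R: "inner_rad a b < outer_rad a b"
    and p: "1 \<le> p"
  shows "(contains_laurent_polys a b (lp_coeffs p a b) \<and> Bw_bounded a b (lp_coeffs p a b) (lp_norm p) w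
            \<longrightarrow> bounded (range (\<lambda>n. w (n+1) * a (n+1) / a n))
              \<and> bounded (range (\<lambda>n. w (n+1) * b n / a n - w n * b (n-1) / a (n-1))))
       \<and> (contains_laurent_polys a b (c0_coeffs a b) \<and> Bw_bounded a b (c0_coeffs a b) sup_norm w
            \<longrightarrow> bounded (range (\<lambda>n. w (n+1) * a (n+1) / a n))
              \<and> bounded (range (\<lambda>n. w (n+1) * b n / a n - w n * b (n-1) / a (n-1))))"
proof (rule conjI; rule impI)
  assume "contains_laurent_polys a b (lp_coeffs p a b) \<and> Bw_bounded a b (lp_coeffs p a b) (lp_norm p) w"
  moreover have "\<And>lam k. lp_coeffs p a b lam \<Longrightarrow> norm (lam k) \<le> lp_norm p lam"
    using p by (simp add: norm_le_lp_norm)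
  ultimately show "bounded (range (\<lambda>n. w (n+1) * a (n+1) / a n))
      \<and> bounded (range (\<lambda>n. w (n+1) * b n / a n - w n * b (n-1) / a (n-1)))"
    using Bw_bounded_imp_weights_bounded[where S = "lp_coeffs p a b" and norm_S = "lp_norm p",
        OF a_nz sup_inf invR_fin r_lt_R lp_coeffs_basis_seq lp_norm_basis_seq]
    by blast
next
  assume "contains_laurent_polys a b (c0_coeffs a b) \<and> Bw_bounded a b (c0_coeffs a b) sup_norm w"
  then show "bounded (range (\<lambda>n. w (n+1) * a (n+1) / a n))
      \<and> bounded (range (\<lambda>n. w (n+1) * b n / a n - w n * b (n-1) / a (n-1)))"
    using Bw_bounded_imp_weights_bounded[where S = "c0_coeffs a b" and norm_S = sup_norm,
        OF a_nz sup_inf invR_fin r_lt_R c0_coeffs_basis_seq sup_norm_basis_seq norm_le_sup_norm[of a b]]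
    by blast
qed

end
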